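(* Let $n\geq 4$ and let $\tau: T_n\to \mathrm{GL}_{n+1}(\mathbb{C})$ be a homogeneous $3$-local representation of the twin group $T_n$. Then $\tau$ is equivalent to one of the eleven representations $\tau_j$, $1\leq j\leq 11$, defined by $\tau_j(s_i)=\mathrm{diag}(I_{i-1},M_j,I_{n-i-1})$ for all $1\leq i\leq n-1$, where (1) $M_1=\begin{pmatrix}1&0&0\\ d&-1&f\\ 0&0&1\end{pmatrix}$, with $d,f\in\mathbb{C}$; (2) $M_2=\begin{pmatrix}1&0&0\\ 0&-\sqrt{1-fh}&f\\ 0&h&\sqrt{1-fh}\end{pmatrix}$, with $h,f\in\mathbb{C}$; (3) $M_3=\begin{pmatrix}1&0&0\\ 0&\sqrt{1-fh}&f\\ 0&h&-\sqrt{1-fh}\end{pmatrix}$, with $h,f\in\mathbb{C}$; (4) $M_4=\begin{pmatrix}1&b&0\\ 0&-1&0\\ 0&h&1\end{pmatrix}$, with $b,h\in\mathbb{C}$; (5) $M_5=\begin{pmatrix}-\sqrt{1-bd}&b&0\\ d&\sqrt{1-bd}&0\\ 0&0&1\end{pmatrix}$, with $b,d\in\mathbb{C}$; (6) $M_6=\begin{pmatrix}\sqrt{1-bd}&b&0\\ d&-\sqrt{1-bd}&0\\ 0&0&1\end{pmatrix}$, with $b,d\in\mathbb{C}$; (7) $M_7=\mathrm{diag}(1,-1,-1)$; (8) $M_8=\mathrm{diag}(-1,-1,1)$; (9) $M_9=\mathrm{diag}(1,1,1)$; (10) $M_{10}=\mathrm{diag}(-1,-1,-1)$; (11) $M_{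11}=\mathrm{diag}(-1,1,-1)$.
   Context: The twin group $T_n$ ($n\geq 2$) is the group with generators $s_1,\dots,s_{n-1}$ and defining relations $s_i^2=1$ for $1\leq i\leq n-1$ and $s_is_j=s_js_i$ for $|i-j|\geq 2$. A representation $\tau:T_n\to\mathrm{GL}_{n+1}(\mathbb{C})$ is called homogeneous $3$-local if there is a single matrix $M\in\mathrm{GL}_3(\mathbb{C})$ such that $\tau(s_i)=\mathrm{diag}(I_{i-1},M,I_{n-i-1})$ (block-diagonal, with $I_r$ the $r\times r$ identity) for all $1\leq i\leq n-1$. For a complex number $z$, $\sqrt{z}$ denotes a fixed choice of square root. Two representations are equivalent if they are conjugate by an invertible matrix. *)

theory Defs
  imports Complex_Main "Jordan_Normal_Form.Matrix"
begin

text \<open>The (n+1)x(n+1) matrix diag(I_{i-1}, M, I_{n-i-1}) for a 3x3 matrix M and 1 <= i <= n-1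
  (rows/columns are 0-indexed, so the block M occupies indices i-1, i, i+1).\<close>
definition local_mat :: "nat \<Rightarrow> complex mat \<Rightarrow> nat \<Rightarrow> complex mat" where
  "local_mat n M i = mat (n+1) (n+1) (\<lambda>(r,c).
     if i - 1 \<le> r \<and> r \<le> i + 1 \<and> i - 1 \<le> c \<and> c \<le> i + 1
     then M $$ (r - (i - 1), c - (i - 1))
     else (if r = c then 1 else 0))"

text \<open>An assignment s_i |-> A i (1 <= i <= n-1) of (n+1)x(n+1) invertible matrices extends to a
  representation of the twin group T_n iff the defining relations of T_n hold.\<close>
definition twin_rep :: "nat \<Rightarrow> (nat \<Rightarrow> complex mat) \<Rightarrow> bool" where
  "twin_rep n A \<longleftrightarrow>
     (\<forall>i\<in>{1..n-1}. A i \<in> carrier_mat (n+1) (n+1) \<and> invertible_mat (A i)) \<and>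
     (\<forall>i\<in>{1..n-1}. A i * A i = 1\<^sub>m (n+1)) \<and>
     (\<forall>i\<in>{1..n-1}. \<forall>j\<in>{1..n-1}. (i + 2 \<le> j \<or> j + 2 \<le> i) \<longrightarrow> A i * A j = A j * A i)"

definition homog_3local_rep :: "nat \<Rightarrow> complex mat \<Rightarrow> bool" where
  "homog_3local_rep n M \<longleftrightarrow> M \<in> carrier_mat 3 3 \<and> invertible_mat M \<and> twin_rep n (local_mat n M)"

text \<open>The eleven matrices M_1, ..., M_11 (with two complex parameters x y; unused for 7..11).
  The square root is the fixed choice csqrt.\<close>
definition twinM :: "nat \<Rightarrow> complex \<Rightarrow> complex \<Rightarrow> complex mat" where
  "twinM j x y = (
     if j = 1 then (let d = x; f = y in mat_of_rows_list 3 [[1,0,0],[d,-1,f],[0,0,1]])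
     else if j = 2 then (let h = x; f = y in
       mat_of_rows_list 3 [[1,0,0],[0,- csqrt (1 - f*h),f],[0,h,csqrt (1 - f*h)]])
     else if j = 3 then (let h = x; f = y in
       mat_of_rows_list 3 [[1,0,0],[0,csqrt (1 - f*h),f],[0,h,- csqrt (1 - f*h)]])
     else if j = 4 then (let b = x; h = y in mat_of_rows_list 3 [[1,b,0],[0,-1,0],[0,h,1]])
     else if j = 5 then (let b = x; d = y in
       mat_of_rows_list 3 [[- csqrt (1 - b*d),b,0],[d,csqrt (1 - b*d),0],[0,0,1]])
     else if j = 6 then (let b = x; d = y in
       mat_of_rows_list 3 [[csqrt (1 - b*d),b,0],[d,- csqrt (1 - b*d),0],[0,0,1]])
     else if j = 7 then mat_of_rows_list 3 [[1,0,0],[0,-1,0],[0,0,-1]]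
     else if j = 8 then mat_of_rows_list 3 [[-1,0,0],[0,-1,0],[0,0,1]]
     else if j = 9 then mat_of_rows_list 3 [[1,0,0],[0,1,0],[0,0,1]]
     else if j = 10 then mat_of_rows_list 3 [[-1,0,0],[0,-1,0],[0,0,-1]]
     else mat_of_rows_list 3 [[-1,0,0],[0,1,0],[0,0,-1]])"

end

theory Submission
  imports Defs
begin

text \<open>Only two relations of \<open>T\<^sub>n\<close> are needed. The relation \<open>s\<^sub>1\<^sup>2 = 1\<close> forces
  \<open>M\<^sup>2 = I\<close>; and since \<open>n \<ge> 4\<close>, the blocks of \<open>\<tau>(s\<^sub>1)\<close> and \<open>\<tau>(s\<^sub>3)\<close> overlap in exactly one
  index, so \<open>s\<^sub>1 s\<^sub>3 = s\<^sub>3 s\<^sub>1\<close> kills the corner entries \<open>M\<^sub>1\<^sub>3, M\<^sub>3\<^sub>1\<close> and couples the others. Solving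
  the resulting polynomial equations by case distinction shows that \<open>M\<close> is literally one of
  \<open>M\<^sub>1, \<dots>, M\<^sub>1\<^sub>1\<close>, so \<open>\<tau> = \<tau>\<^sub>j\<close> with the identity as intertwiner.\<close>

lemma mult_mat_index_truncate:
  assumes "A \<in> carrier_mat nr N" "B \<in> carrier_mat N nc" "r < nr" "c < nc" "m \<le> N"
    and "\<And>k. m \<le> k \<Longrightarrow> k < N \<Longrightarrow> A $$ (r,k) = 0"
  shows "(A * B) $$ (r,c) = (\<Sum>k<m. A $$ (r,k) * B $$ (k,c))"
proof -
  have "(A * B) $$ (r,c) = (\<Sum>k<N. A $$ (r,k) * B $$ (k,c))"
    using assms(1-4) by (simp add: scalar_prod_def atLeast0LessThan)
  also have "\<dots> = (\<Sum>k<m. A $$ (r,k) * B $$ (k,c))"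
    using assms(5,6) by (intro sum.mono_neutral_right) auto
  finally show ?thesis .
qed

lemma index_local_mat:
  assumes "r < n+1" "c < n+1"
  shows "local_mat n M i $$ (r,c) =
    (if i - 1 \<le> r \<and> r \<le> i + 1 \<and> i - 1 \<le> c \<and> c \<le> i + 1
     then M $$ (r - (i - 1), c - (i - 1)) else if r = c then 1 else 0)"
  using assms by (simp add: local_mat_def)

lemma local_mat_carrier: "local_mat n M i \<in> carrier_mat (n+1) (n+1)"
  by (simp add: local_mat_def)

lemma mat_3_3_eq_rows:
  assumes "M \<in> carrier_mat 3 3"
  shows "M = mat_of_rows_list 3
    [[M$$(0,0), M$$(0,1), M$$(0,2)], [M$$(1,0), M$$(1,1), M$$(1,2)], [M$$(2,0), M$$(2,1), M$$(2,2)]]"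
  using assms by (auto intro!: eq_matI simp: mat_of_rows_list_def less_Suc_eq numeral_eq_Suc)

lemma square_one_if_local_mat_square_one:
  assumes "2 \<le> n" "M \<in> carrier_mat 3 3" "local_mat n M 1 * local_mat n M 1 = 1\<^sub>m (n+1)"
  shows "M * M = 1\<^sub>m 3"
proof (rule eq_matI)
  fix r s assume "r < dim_row (1\<^sub>m 3 :: complex mat)" "s < dim_col (1\<^sub>m 3 :: complex mat)"
  then have rs: "r < 3" "s < 3" by simp_all
  have "(local_mat n M 1 * local_mat n M 1) $$ (r,s) = (\<Sum>k<3. M $$ (r,k) * M $$ (k,s))"
    using rs assms(1)
    by (subst mult_mat_index_truncate[OF local_mat_carrier local_mat_carrier, where m = 3])
       (auto simp: index_local_mat intro!: sum.cong)
  then show "(M * M) $$ (r,s) = 1\<^sub>m 3 $$ (r,s)"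
    using rs assms by (simp add: scalar_prod_def atLeast0LessThan)
qed (use assms(2) in auto)

lemma far_commuting_local_mats_entries:
  fixes a b c d e f g h k :: complex
  assumes "4 \<le> n" "M = mat_of_rows_list 3 [[a,b,c],[d,e,f],[g,h,k]]"
    and "local_mat n M 1 * local_mat n M 3 = local_mat n M 3 * local_mat n M 1"
  shows "c = 0 \<and> g = 0 \<and> f * (a - 1) = 0 \<and> b * f = 0 \<and> h * (a - 1) = 0 \<and>
    b * (k - 1) = 0 \<and> d * h = 0 \<and> d * (k - 1) = 0"
proof -
  let ?S = "local_mat n M 1" and ?T = "local_mat n M 3"
  \<comment> \<open>Both factors are the identity outside the indices \<open>0..4\<close>.\<close>
  have window: "(\<Sum>q<5. ?S $$ (r,q) * ?T $$ (q,s)) = (\<Sum>q<5. ?T $$ (r,q) * ?S $$ (q,s))"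
    if "r < 5" "s < 5" for r s
    using arg_cong[OF assms(3), of "\<lambda>A. A $$ (r,s)"] that assms(1)
    by (simp add: mult_mat_index_truncate[OF local_mat_carrier local_mat_carrier, where m = 5]
        index_local_mat)
  have "c * a = c" "c * c = 0" "f * a = f" "f * b = 0" "h = a * h" "k * b = b" "d * h = 0"
    "d = d * k" "g = a * g" "g * g = 0"
    using window[of 0 2] window[of 0 4] window[of 1 2] window[of 1 3] window[of 2 1]
      window[of 2 3] window[of 3 1] window[of 3 2] window[of 2 0] window[of 4 0] assms(1,2)
    by (simp_all add: index_local_mat mat_of_rows_list_def numeral_eq_Suc lessThan_Suc)
  then show ?thesis by (auto simp: algebra_simps)
qed

lemma involution_entries:
  fixes a b d e f h k :: complex
  assumes "M = mat_of_rows_list 3 [[a,b,0],[d,e,f],[0,h,k]]" "M * M = 1\<^sub>m 3"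
  shows "a * a + b * d = 1 \<and> b * (a + e) = 0 \<and> b * f = 0 \<and> d * (a + e) = 0 \<and>
    b * d + e * e + f * h = 1 \<and> f * (e + k) = 0 \<and> d * h = 0 \<and> h * (e + k) = 0 \<and>
    f * h + k * k = 1"
proof -
  have "(M * M) $$ (r,s) = 1\<^sub>m 3 $$ (r,s)" if "r < 3" "s < 3" for r s
    using assms(2) by simp
  from this[of 0 0] this[of 0 1] this[of 0 2] this[of 1 0] this[of 1 1] this[of 1 2]
    this[of 2 0] this[of 2 1] this[of 2 2]
  show ?thesis
    using assms(1)
    by (simp add: mat_of_rows_list_def scalar_prod_def numeral_eq_Suc lessThan_Suc algebra_simps)
qed

lemma eq_csqrt_or_eq_minus_csqrt: "(e::complex) * e = z \<Longrightarrow> e = csqrt z \<or> e = - csqrt z"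
  by (metis power2_csqrt power2_eq_square square_eq_iff)

lemma twinM_cases_upper_left_ne_1:
  fixes a b d e f h k :: complex
  assumes "a \<noteq> 1" "f * (a - 1) = 0" "h * (a - 1) = 0" "b * (k - 1) = 0" "d * (k - 1) = 0"
    and "a * a + b * d = 1" "b * (a + e) = 0" "d * (a + e) = 0" "b * d + e * e + f * h = 1"
    and "f * h + k * k = 1"
  shows "\<exists>j\<in>{1..11}. \<exists>x y. mat_of_rows_list 3 [[a,b,0],[d,e,f],[0,h,k]] = twinM j x y"
proof -
  have f: "f = 0" and h: "h = 0" using assms(1-3) by simp_all
  show ?thesis
  proof (cases "k = 1")
    case False
    then have "b = 0" "d = 0" using assms(4,5) by simp_all
    then have "a = -1" "k = -1" "e = 1 \<or> e = -1"
      using assms(1,6,9,10) \<open>k \<noteq> 1\<close> f h by (simp_all add: square_eq_1_iff)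
    then show ?thesis using \<open>b = 0\<close> \<open>d = 0\<close> f h
      by (elim disjE; intro bexI[of _ 11] bexI[of _ 10]) (simp_all add: twinM_def)
  next
    case k: True
    show ?thesis
    proof (cases "e = -a")
      case True
      have "a * a = 1 - b * d" using assms(6) by (simp add: algebra_simps)
      then have "a = csqrt (1 - b * d) \<or> a = - csqrt (1 - b * d)"
        by (rule eq_csqrt_or_eq_minus_csqrt)
      then show ?thesis using True k f h
        by (elim disjE; intro bexI[of _ 6] bexI[of _ 5] exI[of _ b] exI[of _ d])
          (simp_all add: twinM_def)
    next
      case False
      then have "a + e \<noteq> 0" by (simp add: add_eq_0_iff)
      then have "b = 0" "d = 0" using assms(7,8) by simp_all
      then have "a = -1" "e = -1"
        using assms(1,6,9) \<open>a + e \<noteq> 0\<close> f by (auto simp: square_eq_1_iff)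
      then show ?thesis using \<open>b = 0\<close> \<open>d = 0\<close> k f h
        by (intro bexI[of _ 8]) (simp_all add: twinM_def)
    qed
  qed
qed

lemma twinM_cases_upper_left_eq_1:
  fixes b d e f h k :: complex
  assumes "b * f = 0" "b * (k - 1) = 0" "d * h = 0" "d * (k - 1) = 0"
    and "b * d = 0" "b * (1 + e) = 0" "d * (1 + e) = 0" "b * d + e * e + f * h = 1"
    and "f * (e + k) = 0" "h * (e + k) = 0" "f * h + k * k = 1"
  shows "\<exists>j\<in>{1..11}. \<exists>x y. mat_of_rows_list 3 [[1,b,0],[d,e,f],[0,h,k]] = twinM j x y"
proof -
  consider "b \<noteq> 0" | "b = 0" "d \<noteq> 0" | "b = 0" "d = 0" by blast
  then show ?thesis
  proof cases
    case 1
    then have "d = 0" "e = -1" "k = 1" "f = 0"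
      using assms(1,2,5,6) by (simp_all add: add_eq_0_iff)
    then show ?thesis by (intro bexI[of _ 4] exI[of _ b] exI[of _ h]) (simp_all add: twinM_def)
  next
    case 2
    then have "h = 0" "e = -1" "k = 1"
      using assms(3,4,7) by (simp_all add: add_eq_0_iff)
    then show ?thesis using \<open>b = 0\<close>
      by (intro bexI[of _ 1] exI[of _ d] exI[of _ f]) (simp_all add: twinM_def)
  next
    case 3
    show ?thesis
    proof (cases "k = -e")
      case True
      have "e * e = 1 - f * h" using assms(8) 3 by (simp add: algebra_simps)
      then have "e = csqrt (1 - f * h) \<or> e = - csqrt (1 - f * h)"
        by (rule eq_csqrt_or_eq_minus_csqrt)
      then show ?thesis using True 3
        by (elim disjE; intro bexI[of _ 3] bexI[of _ 2] exI[of _ h] exI[of _ f])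
          (simp_all add: twinM_def mult.commute)
    next
      case False
      then have "e + k \<noteq> 0" by (simp add: add_eq_0_iff)
      then have "f = 0" "h = 0" using assms(9,10) by simp_all
      then have "e = 1 \<or> e = -1" "k = 1 \<or> k = -1"
        using assms(8,11) 3 by (simp_all add: square_eq_1_iff)
      then have "e = k" "e = 1 \<or> e = -1" using \<open>e + k \<noteq> 0\<close> by auto
      then show ?thesis using \<open>f = 0\<close> \<open>h = 0\<close> 3
        by (elim disjE; intro bexI[of _ 9] bexI[of _ 7]) (simp_all add: twinM_def)
    qed
  qed
qed

lemma twinM_of_far_commuting_involution:
  fixes a b d e f h k :: complex
  assumes "M = mat_of_rows_list 3 [[a,b,0],[d,e,f],[0,h,k]]" "M * M = 1\<^sub>m 3"
    and "f * (a - 1) = 0" "h * (a - 1) = 0" "b * (k - 1) = 0" "d * (k - 1) = 0" "d * h = 0"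
  shows "\<exists>j\<in>{1..11}. \<exists>x y. M = twinM j x y"
proof (cases "a = 1")
  case True
  then show ?thesis
    using involution_entries[OF assms(1,2)] assms twinM_cases_upper_left_eq_1 by simp
next
  case False
  then show ?thesis
    using involution_entries[OF assms(1,2)] assms twinM_cases_upper_left_ne_1[OF False] by simp
qed

theorem theorem3p1:
  fixes n :: nat and M :: "complex mat"
  assumes "n \<ge> 4"
    and "homog_3local_rep n M"
  shows "\<exists>j\<in>{1..11}. \<exists>x y :: complex. \<exists>P Q.
           P \<in> carrier_mat (n+1) (n+1) \<and> Q \<in> carrier_mat (n+1) (n+1) \<and>
           P * Q = 1\<^sub>m (n+1) \<and> Q * P = 1\<^sub>m (n+1) \<and>
           (\<forall>i\<in>{1..n-1}. local_mat n M i = P * local_mat n (twinM j x y) i * Q)"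
proof -
  have M: "M \<in> carrier_mat 3 3" and rep: "twin_rep n (local_mat n M)"
    using assms(2) by (simp_all add: homog_3local_rep_def)
  have "1 \<in> {1..n-1}" "3 \<in> {1..n-1}" using assms(1) by auto
  then have square: "local_mat n M 1 * local_mat n M 1 = 1\<^sub>m (n+1)"
    and commute: "local_mat n M 1 * local_mat n M 3 = local_mat n M 3 * local_mat n M 1"
    using rep unfolding twin_rep_def by auto
  obtain a b c d e f g h k where rows: "M = mat_of_rows_list 3 [[a,b,c],[d,e,f],[g,h,k]]"
    using mat_3_3_eq_rows[OF M] by blast
  note far = far_commuting_local_mats_entries[OF assms(1) rows commute]
  have "M * M = 1\<^sub>m 3"
    using square_one_if_local_mat_square_one[OF _ M square] assms(1) by simp
  then obtain j x y where j: "j \<in> {1..11}" and "M = twinM j x y"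
    using twinM_of_far_commuting_involution[of M a b d e f h k] rows far by auto
  then have "local_mat n M i = 1\<^sub>m (n+1) * local_mat n (twinM j x y) i * 1\<^sub>m (n+1)" for i
    using local_mat_carrier[of n M i] by simp
  then show ?thesis
    using j one_carrier_mat[of "n+1"] left_mult_one_mat[OF one_carrier_mat[of "n+1"]] by blast
qed

end
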